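(* Let $(G_n)_{n\in\mathbb{N}}$ be an $\mathrm{FO}$-convergent sequence of finite graphs with a modeling limit $L$, and let $\xi(x)$ be a formula in the language of graphs with one free variable that is algebraic in $L$, with $\xi(L)\neq\emptyset$. Then there exist a sequence $(r_n)_{n\in\mathbb{N}}$ with $r_n\in V(G_n)$ and a vertex $r\in\xi(L)$ such that $(G_n,r_n)$ $\mathrm{FO}$-converges to $(L,r)$, i.e. $\lim_{n\to\infty}\langle\phi,(G_n,r_n)\rangle=\langle\phi,(L,r)\rangle$ for every first-order formula $\phi$ in the language of rooted graphs.
   Context: Graphs are first-order structures in the language with one binary (edge) relation. For a formula $\phi$ with $p$ free variables and a structure $G$, $\phi(G)=\{\mathbf{v}\in V(G)^p : G\models\phi(\mathbf{v})\}$. The Stone pairing of $\phi$ ($p\ge1$) with a finite graph $G$ is $\langle\phi,G\rangle=|\phi(G)|/|V(G)|^p$; for sentences it is $1$ if $G\models\phi$ and $0$ otherwise. A sequence of finite graphs is $\mathrm{FO}$-convergent if $(\langle\phi,G_n\rangle)$ converges for every formula $\phi$. A modeling is a graph $L$ whose vertex set is a standard Borel space with a probability measure $\nu$ such that every first-order definable set $\phi(L)\subseteq V(L)^p$ is measurable; $\langle\phi,L\rangle=\nu^{\otimes p}(\phi(L))$ (and $1$/$0$ for sentences). $L$ is a modeling limit of $(G_n)$ if $\lim_n\langle\phi,G_n\rangle=\langle\phi,L\rangle$ for all $\phi$. The language of rooted graphs adds a constant symbol $\mathrm{Root}$; $(G,r)$ is $G$ with $\mathrm{Root}$ interpreted as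 $r$, and Stone pairings with rooted structures are defined in the same way. A formula $\xi(x)$ is algebraic in $L$ if $\xi(L)$ is finite. *)

theory Defs
  imports "HOL-Probability.Probability"
begin

text \<open>Terms: variables (indexed by nat) and the constant symbol Root
  (only allowed in the language of rooted graphs).\<close>
datatype tm = Var nat | Root

datatype fm = Eq tm tm | Adj tm tm | Neg fm | Conj fm fm | Ex nat fm

fun tm_vars :: "tm \<Rightarrow> nat set" where
  "tm_vars (Var x) = {x}"
| "tm_vars Root = {}"

fun fv :: "fm \<Rightarrow> nat set" where
  "fv (Eq s t) = tm_vars s \<union> tm_vars t"
| "fv (Adj s t) = tm_vars s \<union> tm_vars t"
| "fv (Neg \<phi>) = fv \<phi>"
| "fv (Conj \<phi> \<psi>) = fv \<phi> \<union> fv \<psi>"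
| "fv (Ex x \<phi>) = fv \<phi> - {x}"

fun tm_has_root :: "tm \<Rightarrow> bool" where
  "tm_has_root (Var x) = False"
| "tm_has_root Root = True"

fun graph_fm :: "fm \<Rightarrow> bool" where
  "graph_fm (Eq s t) = (\<not> tm_has_root s \<and> \<not> tm_has_root t)"
| "graph_fm (Adj s t) = (\<not> tm_has_root s \<and> \<not> tm_has_root t)"
| "graph_fm (Neg \<phi>) = graph_fm \<phi>"
| "graph_fm (Conj \<phi> \<psi>) = (graph_fm \<phi> \<and> graph_fm \<psi>)"
| "graph_fm (Ex x \<phi>) = graph_fm \<phi>"

fun eval_tm :: "'a \<Rightarrow> (nat \<Rightarrow> 'a) \<Rightarrow> tm \<Rightarrow> 'a" where
  "eval_tm r a (Var x) = a x"
| "eval_tm r a Root = r"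

text \<open>Satisfaction in the structure with vertex set V, edge relation E,
  Root interpreted by r, under assignment a.  For formulas of the language
  of graphs the value of r is irrelevant.\<close>
fun sat :: "'a set \<Rightarrow> ('a \<Rightarrow> 'a \<Rightarrow> bool) \<Rightarrow> 'a \<Rightarrow> (nat \<Rightarrow> 'a) \<Rightarrow> fm \<Rightarrow> bool" where
  "sat V E r a (Eq s t) = (eval_tm r a s = eval_tm r a t)"
| "sat V E r a (Adj s t) = E (eval_tm r a s) (eval_tm r a t)"
| "sat V E r a (Neg \<phi>) = (\<not> sat V E r a \<phi>)"
| "sat V E r a (Conj \<phi> \<psi>) = (sat V E r a \<phi> \<and> sat V E r a \<psi>)"
| "sat V E r a (Ex x \<phi>) = (\<exists>v\<in>V. sat V E r (a(x := v)) \<phi>)"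

definition is_graph :: "'a set \<Rightarrow> ('a \<Rightarrow> 'a \<Rightarrow> bool) \<Rightarrow> bool" where
  "is_graph V E \<longleftrightarrow> (\<forall>u\<in>V. \<forall>v\<in>V. E u v \<longleftrightarrow> E v u) \<and> (\<forall>v\<in>V. \<not> E v v)"

text \<open>The definable set phi(G), as a set of assignments of the free
  variables of phi (extensional functions on fv phi).\<close>
definition defset :: "'a set \<Rightarrow> ('a \<Rightarrow> 'a \<Rightarrow> bool) \<Rightarrow> 'a \<Rightarrow> fm \<Rightarrow> (nat \<Rightarrow> 'a) set" where
  "defset V E r \<phi> = {a \<in> fv \<phi> \<rightarrow>\<^sub>E V. sat V E r a \<phi>}"

definition stone_fin :: "'a set \<Rightarrow> ('a \<Rightarrow> 'a \<Rightarrow> bool) \<Rightarrow> 'a \<Rightarrow> fm \<Rightarrow> real" where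
  "stone_fin V E r \<phi> = real (card (defset V E r \<phi>)) / real (card V) ^ card (fv \<phi>)"

text \<open>For sentences
  the product over the empty index set is the one-point probability space.\<close>
definition stone_mod :: "'b measure \<Rightarrow> ('b \<Rightarrow> 'b \<Rightarrow> bool) \<Rightarrow> 'b \<Rightarrow> fm \<Rightarrow> real" where
  "stone_mod M E r \<phi> = measure (PiM (fv \<phi>) (\<lambda>_. M)) (defset (space M) E r \<phi>)"

definition definable_measurable ::
    "(fm \<Rightarrow> bool) \<Rightarrow> 'b measure \<Rightarrow> ('b \<Rightarrow> 'b \<Rightarrow> bool) \<Rightarrow> 'b \<Rightarrow> bool" where
  "definable_measurable P M E r \<longleftrightarrow>
     (\<forall>\<phi>. P \<phi> \<longrightarrow> defset (space M) E r \<phi> \<in> sets (PiM (fv \<phi>) (\<lambda>_. M)))"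

text \<open>A modeling: vertex set a standard Borel space (here: a Polish space with
  its Borel sigma-algebra), a probability measure, and all first-order
  definable sets (language of graphs) measurable.\<close>
definition is_modeling :: "('b::polish_space) measure \<Rightarrow> ('b \<Rightarrow> 'b \<Rightarrow> bool) \<Rightarrow> bool" where
  "is_modeling M E \<longleftrightarrow> sets M = sets borel \<and> prob_space M \<and> is_graph (space M) E
     \<and> definable_measurable graph_fm M E undefined"

end

(*
  Fix any r in xi(L) and let k = |xi(L)|.  The sentence "at most k vertices satisfy xi" holds
  in L, hence eventually in G_n.  Given finitely many rooted formulas phi_i with values
  p_i = <phi_i, (L, r)>, a conjunction Psi of independent copies of the phi_i and their
  negations has <Psi, (G, v)> = prod_i t_i^a_i (1 - t_i)^b_i, where t_i = <phi_i, (G, v)>.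
  Choosing a_i / (a_i + b_i) close to p_i makes this product peak so sharply at t = p that it
  drops below 1/(2k) of its peak value as soon as one t_i is eps-far from p_i.  The graph
  formula "some xi-vertex satisfies Psi" has value at least the peak value in L; if every
  vertex of xi(G_n) were far from r, its value in G_n would be at most half of that.  So
  eventually some vertex of xi(G_n) is eps-close to r on all phi_i, and a diagonal argument
  along an enumeration of all formulas yields the roots r_n.
*)
theory Submission
  imports Defs
begin

section \<open>Renaming, root substitution and fresh variables\<close>

fun rename_tm :: "(nat \<Rightarrow> nat) \<Rightarrow> tm \<Rightarrow> tm" where
  "rename_tm f (Var x) = Var (f x)"
| "rename_tm f Root = Root"

fun rename_fm :: "(nat \<Rightarrow> nat) \<Rightarrow> fm \<Rightarrow> fm" where
  "rename_fm f (Eq s t) = Eq (rename_tm f s) (rename_tm f t)"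
| "rename_fm f (Adj s t) = Adj (rename_tm f s) (rename_tm f t)"
| "rename_fm f (Neg \<phi>) = Neg (rename_fm f \<phi>)"
| "rename_fm f (Conj \<phi> \<psi>) = Conj (rename_fm f \<phi>) (rename_fm f \<psi>)"
| "rename_fm f (Ex x \<phi>) = Ex (f x) (rename_fm f \<phi>)"

lemma eval_rename_tm: "eval_tm r a (rename_tm f s) = eval_tm r (a \<circ> f) s"
  by (cases s) auto

lemma sat_rename_fm:
  assumes "inj f"
  shows "sat V E r a (rename_fm f \<phi>) = sat V E r (a \<circ> f) \<phi>"
proof (induction \<phi> arbitrary: a)
  case (Ex x \<phi>)
  have "(a(f x := v)) \<circ> f = (a \<circ> f)(x := v)" for v
    using assms by (auto simp: fun_eq_iff inj_eq)
  then show ?case by (simp only: rename_fm.simps sat.simps Ex.IH)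
qed (auto simp: eval_rename_tm)

lemma fv_rename_fm: "inj f \<Longrightarrow> fv (rename_fm f \<phi>) = f ` fv \<phi>"
proof (induction \<phi>)
  case (Eq s t) then show ?case by (cases s; cases t) auto
next
  case (Adj s t) then show ?case by (cases s; cases t) auto
qed (auto simp: inj_eq image_Un)

lemma graph_fm_rename_fm: "graph_fm (rename_fm f \<phi>) = graph_fm \<phi>"
proof (induction \<phi>)
  case (Eq s t) then show ?case by (cases s; cases t) auto
next
  case (Adj s t) then show ?case by (cases s; cases t) auto
qed auto

fun subst_root_tm :: "nat \<Rightarrow> tm \<Rightarrow> tm" where
  "subst_root_tm y (Var x) = Var x"
| "subst_root_tm y Root = Var y"

fun subst_root :: "nat \<Rightarrow> fm \<Rightarrow> fm" where
  "subst_root y (Eq s t) = Eq (subst_root_tm y s) (subst_root_tm y t)"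
| "subst_root y (Adj s t) = Adj (subst_root_tm y s) (subst_root_tm y t)"
| "subst_root y (Neg \<phi>) = Neg (subst_root y \<phi>)"
| "subst_root y (Conj \<phi> \<psi>) = Conj (subst_root y \<phi>) (subst_root y \<psi>)"
| "subst_root y (Ex x \<phi>) = Ex x (subst_root y \<phi>)"

fun bound_vars :: "fm \<Rightarrow> nat set" where
  "bound_vars (Eq s t) = {}"
| "bound_vars (Adj s t) = {}"
| "bound_vars (Neg \<phi>) = bound_vars \<phi>"
| "bound_vars (Conj \<phi> \<psi>) = bound_vars \<phi> \<union> bound_vars \<psi>"
| "bound_vars (Ex x \<phi>) = insert x (bound_vars \<phi>)"

lemma sat_subst_root:
  "y \<notin> bound_vars \<phi> \<Longrightarrow> sat V E r a (subst_root y \<phi>) = sat V E (a y) a \<phi>"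
proof (induction \<phi> arbitrary: a)
  case (Eq s t) then show ?case by (cases s; cases t) auto
next
  case (Adj s t) then show ?case by (cases s; cases t) auto
qed auto

lemma fv_subset_fv_subst_root: "fv \<phi> \<subseteq> fv (subst_root y \<phi>)"
proof (induction \<phi>)
  case (Eq s t) then show ?case by (cases s; cases t) auto
next
  case (Adj s t) then show ?case by (cases s; cases t) auto
qed auto

lemma fv_subst_root_subset: "fv (subst_root y \<phi>) \<subseteq> insert y (fv \<phi>)"
proof (induction \<phi>)
  case (Eq s t) then show ?case by (cases s; cases t) auto
next
  case (Adj s t) then show ?case by (cases s; cases t) auto
qed auto

lemma graph_fm_subst_root: "graph_fm (subst_root y \<phi>)"
proof (induction \<phi>)
  case (Eq s t) then show ?case by (cases s; cases t) auto
next
  case (Adj s t) then show ?case by (cases s; cases t) auto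
qed auto

lemma sat_cong_fv: "(\<And>z. z \<in> fv \<phi> \<Longrightarrow> a z = b z) \<Longrightarrow> sat V E r a \<phi> = sat V E r b \<phi>"
proof (induction \<phi> arbitrary: a b)
  case (Eq s t) then show ?case by (cases s; cases t) auto
next
  case (Adj s t) then show ?case by (cases s; cases t) auto
next
  case (Neg \<phi>)
  have "sat V E r a \<phi> = sat V E r b \<phi>" by (rule Neg.IH) (use Neg.prems in simp)
  then show ?case by simp
next
  case (Conj \<phi> \<psi>)
  have "sat V E r a \<phi> = sat V E r b \<phi>" by (rule Conj.IH(1)) (use Conj.prems in simp)
  moreover have "sat V E r a \<psi> = sat V E r b \<psi>" by (rule Conj.IH(2)) (use Conj.prems in simp)
  ultimately show ?case by simp
next
  case (Ex x \<phi>)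
  have "sat V E r (a(x := v)) \<phi> = sat V E r (b(x := v)) \<phi>" for v
    by (rule Ex.IH) (use Ex.prems in auto)
  then show ?case by simp
qed

lemma sat_graph_fm_root: "graph_fm \<phi> \<Longrightarrow> sat V E r a \<phi> = sat V E r' a \<phi>"
proof (induction \<phi> arbitrary: a)
  case (Eq s t) then show ?case by (cases s; cases t) auto
next
  case (Adj s t) then show ?case by (cases s; cases t) auto
qed auto

fun var_bound_tm :: "tm \<Rightarrow> nat" where
  "var_bound_tm (Var x) = Suc x"
| "var_bound_tm Root = 0"

fun var_bound :: "fm \<Rightarrow> nat" where
  "var_bound (Eq s t) = max (var_bound_tm s) (var_bound_tm t)"
| "var_bound (Adj s t) = max (var_bound_tm s) (var_bound_tm t)"
| "var_bound (Neg \<phi>) = var_bound \<phi>"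
| "var_bound (Conj \<phi> \<psi>) = max (var_bound \<phi>) (var_bound \<psi>)"
| "var_bound (Ex x \<phi>) = max (Suc x) (var_bound \<phi>)"

lemma less_var_bound: "z \<in> fv \<phi> \<union> bound_vars \<phi> \<Longrightarrow> z < var_bound \<phi>"
proof (induction \<phi>)
  case (Eq s t) then show ?case by (cases s; cases t) auto
next
  case (Adj s t) then show ?case by (cases s; cases t) auto
qed auto

lemma var_bound_fresh: "var_bound \<phi> \<notin> fv \<phi>" "var_bound \<phi> \<notin> bound_vars \<phi>"
  using less_var_bound[of "var_bound \<phi>" \<phi>] by auto

lemma finite_fv: "finite (fv \<phi>)"
  using less_var_bound[of _ \<phi>] by (meson UnI1 finite_nat_set_iff_bounded)

lemma sat_subst_fresh_root:
  assumes "y \<notin> fv \<phi>" "y \<notin> bound_vars \<phi>"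
  shows "sat V E r' (a(y := r)) (subst_root y \<phi>) = sat V E r a \<phi>"
proof -
  have "sat V E r (a(y := r)) \<phi> = sat V E r a \<phi>"
    by (rule sat_cong_fv) (use assms(1) in auto)
  then show ?thesis by (simp add: sat_subst_root[OF assms(2)])
qed

section \<open>Stone pairings as product measures\<close>

lemma space_PiM_const: "space (PiM I (\<lambda>_. N)) = I \<rightarrow>\<^sub>E space N"
  by (simp add: space_PiM)

lemma stone_mod_bounds:
  assumes "prob_space N"
  shows "0 \<le> stone_mod N E r \<phi>" "stone_mod N E r \<phi> \<le> 1"
proof -
  interpret prob_space "PiM (fv \<phi>) (\<lambda>_. N)" by (rule prob_space_PiM) (use assms in auto)
  show "0 \<le> stone_mod N E r \<phi>" "stone_mod N E r \<phi> \<le> 1" by (simp_all add: stone_mod_def)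
qed

lemma stone_mod_Neg:
  assumes "prob_space N" and meas: "defset (space N) E r \<phi> \<in> sets (PiM (fv \<phi>) (\<lambda>_. N))"
  shows "stone_mod N E r (Neg \<phi>) = 1 - stone_mod N E r \<phi>"
proof -
  interpret prob_space "PiM (fv \<phi>) (\<lambda>_. N)" by (rule prob_space_PiM) (use assms in auto)
  have "defset (space N) E r (Neg \<phi>) = space (PiM (fv \<phi>) (\<lambda>_. N)) - defset (space N) E r \<phi>"
    by (auto simp: defset_def space_PiM_const)
  then show ?thesis using prob_compl[OF meas] by (simp add: stone_mod_def)
qed

lemma stone_mod_rename_fm:
  assumes N: "prob_space N" and f: "inj f"
    and meas: "defset (space N) E r \<phi> \<in> sets (PiM (fv \<phi>) (\<lambda>_. N))"
  shows "stone_mod N E r (rename_fm f \<phi>) = stone_mod N E r \<phi>"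
proof -
  let ?I = "fv \<phi>" and ?K = "f ` fv \<phi>"
  let ?t = "\<lambda>\<omega>. \<lambda>i\<in>?I. \<omega> (f i)"
  have t_meas: "?t \<in> measurable (PiM ?K (\<lambda>_. N)) (PiM ?I (\<lambda>_. N))"
    by (intro measurable_restrict measurable_component_singleton) auto
  have distr_t: "distr (PiM ?K (\<lambda>_. N)) (PiM ?I (\<lambda>_. N)) ?t = PiM ?I (\<lambda>_. N)"
  proof (rule distr_PiM_reindex)
    show "inj_on f ?I" using f by (meson inj_on_subset subset_UNIV)
  qed (use N in auto)
  have "sat (space N) E r (a \<circ> f) \<phi> = sat (space N) E r (?t a) \<phi>" for a
    by (rule sat_cong_fv) auto
  then have "defset (space N) E r (rename_fm f \<phi>) =
      ?t -` defset (space N) E r \<phi> \<inter> space (PiM ?K (\<lambda>_. N))"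
    by (auto simp: defset_def space_PiM_const fv_rename_fm[OF f] sat_rename_fm[OF f] PiE_iff
        extensional_def)
  then show ?thesis
    using measure_distr[OF t_meas meas] by (simp add: stone_mod_def fv_rename_fm[OF f] distr_t)
qed

lemma stone_mod_Conj:
  assumes N: "prob_space N" and disj: "fv \<phi> \<inter> fv \<psi> = {}"
    and meas: "defset (space N) E r \<phi> \<in> sets (PiM (fv \<phi>) (\<lambda>_. N))"
      "defset (space N) E r \<psi> \<in> sets (PiM (fv \<psi>) (\<lambda>_. N))"
      "defset (space N) E r (Conj \<phi> \<psi>) \<in> sets (PiM (fv (Conj \<phi> \<psi>)) (\<lambda>_. N))"
  shows "stone_mod N E r (Conj \<phi> \<psi>) = stone_mod N E r \<phi> * stone_mod N E r \<psi>"
proof -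
  let ?I = "fv \<phi>" and ?J = "fv \<psi>"
  let ?A = "defset (space N) E r \<phi>" and ?B = "defset (space N) E r \<psi>"
  let ?P = "PiM ?I (\<lambda>_. N) \<Otimes>\<^sub>M PiM ?J (\<lambda>_. N)"
  interpret product_sigma_finite "\<lambda>_. N"
    unfolding product_sigma_finite_def using N prob_space_imp_sigma_finite by blast
  interpret P2: prob_space "PiM ?J (\<lambda>_. N)" by (rule prob_space_PiM) (rule N)
  have sat_merge: "sat (space N) E r (merge ?I ?J (a, b)) \<phi> = sat (space N) E r a \<phi>"
      "sat (space N) E r (merge ?I ?J (a, b)) \<psi> = sat (space N) E r b \<psi>" for a b
    by (rule sat_cong_fv; use disj in \<open>auto simp: merge_def\<close>)+
  have merge_in: "merge ?I ?J (a, b) \<in> (?I \<union> ?J) \<rightarrow>\<^sub>E space N"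
    if "a \<in> ?I \<rightarrow>\<^sub>E space N" "b \<in> ?J \<rightarrow>\<^sub>E space N" for a b
    using that disj by (auto simp: PiE_iff split_merge)
  have preimage: "merge ?I ?J -` defset (space N) E r (Conj \<phi> \<psi>) \<inter> space ?P = ?A \<times> ?B"
  proof (intro set_eqI iffI)
    fix z assume "z \<in> merge ?I ?J -` defset (space N) E r (Conj \<phi> \<psi>) \<inter> space ?P"
    then show "z \<in> ?A \<times> ?B"
      by (cases z) (simp add: defset_def space_pair_measure space_PiM_const sat_merge)
  next
    fix z assume "z \<in> ?A \<times> ?B"
    then show "z \<in> merge ?I ?J -` defset (space N) E r (Conj \<phi> \<psi>) \<inter> space ?P"
      by (cases z) (simp add: defset_def space_pair_measure space_PiM_const sat_merge merge_in)
  qed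
  have "stone_mod N E r (Conj \<phi> \<psi>) =
      measure (distr ?P (PiM (?I \<union> ?J) (\<lambda>_. N)) (merge ?I ?J)) (defset (space N) E r (Conj \<phi> \<psi>))"
    by (simp add: stone_mod_def distr_merge[OF disj finite_fv finite_fv])
  also have "\<dots> = measure ?P (?A \<times> ?B)"
    using meas(3) by (simp add: measure_distr preimage)
  also have "\<dots> = stone_mod N E r \<phi> * stone_mod N E r \<psi>"
    using P2.emeasure_pair_measure_Times[OF meas(1,2)]
    by (simp add: stone_mod_def measure_def enn2real_mult)
  finally show ?thesis .
qed

lemma defset_sentence:
  "fv \<phi> = {} \<Longrightarrow> defset V E r \<phi> = (if sat V E r (\<lambda>_. undefined) \<phi> then {\<lambda>_. undefined} else {})"
  by (auto simp: defset_def)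

lemma stone_mod_sentence:
  "fv \<phi> = {} \<Longrightarrow> stone_mod N E r \<phi> = (if sat (space N) E r (\<lambda>_. undefined) \<phi> then 1 else 0)"
  by (simp add: stone_mod_def defset_sentence PiM_empty)

lemma stone_fin_sentence:
  "fv \<phi> = {} \<Longrightarrow> stone_fin V E r \<phi> = (if sat V E r (\<lambda>_. undefined) \<phi> then 1 else 0)"
  by (simp add: stone_fin_def defset_sentence)

lemma singleton_eq_PiE: "a \<in> I \<rightarrow>\<^sub>E V \<Longrightarrow> {a} = PiE I (\<lambda>i. {a i})"
  by (simp add: PiE_iff PiE_singleton)

lemma sets_PiM_uniform_count_measure:
  assumes "finite V" "finite I" "D \<subseteq> I \<rightarrow>\<^sub>E V"
  shows "D \<in> sets (PiM I (\<lambda>_. uniform_count_measure V))"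
proof (rule sets.countable)
  show "countable D"
    using assms by (meson countable_finite finite_PiE finite_subset)
  fix a assume "a \<in> D"
  with assms(3) have a: "a \<in> I \<rightarrow>\<^sub>E V" by blast
  show "{a} \<in> sets (PiM I (\<lambda>_. uniform_count_measure V))"
    unfolding singleton_eq_PiE[OF a]
    by (rule sets_PiM_I_finite[OF assms(2)])
       (use a in \<open>auto simp: sets_uniform_count_measure PiE_iff\<close>)
qed

lemma definable_measurable_uniform_count_measure:
  "finite V \<Longrightarrow> definable_measurable P (uniform_count_measure V) E r"
  by (auto simp: definable_measurable_def defset_def space_uniform_count_measure
      intro!: sets_PiM_uniform_count_measure finite_fv)

lemma stone_fin_eq_stone_mod:
  assumes V: "finite V" "V \<noteq> {}"
  shows "stone_fin V E r \<phi> = stone_mod (uniform_count_measure V) E r \<phi>"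
proof -
  let ?N = "uniform_count_measure V" and ?I = "fv \<phi>" and ?D = "defset V E r \<phi>"
  interpret product_sigma_finite "\<lambda>_. ?N"
    unfolding product_sigma_finite_def
    using prob_space_uniform_count_measure[OF V] prob_space_imp_sigma_finite by blast
  interpret prob_space "PiM ?I (\<lambda>_. ?N)"
    by (rule prob_space_PiM) (rule prob_space_uniform_count_measure[OF V])
  have D_sub: "?D \<subseteq> ?I \<rightarrow>\<^sub>E V" by (auto simp: defset_def)
  then have "finite ?D" using V finite_fv by (meson finite_PiE finite_subset)
  have point: "measure (PiM ?I (\<lambda>_. ?N)) {a} = (1 / real (card V)) ^ card ?I"
    if a: "a \<in> ?I \<rightarrow>\<^sub>E V" for a
  proof -
    have "emeasure (PiM ?I (\<lambda>_. ?N)) {a} = (\<Prod>i\<in>?I. emeasure ?N {a i})"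
      unfolding singleton_eq_PiE[OF a]
      by (rule emeasure_PiM[OF finite_fv])
         (use a in \<open>auto simp: sets_uniform_count_measure PiE_iff\<close>)
    also have "\<dots> = (\<Prod>i\<in>?I. ennreal (1 / real (card V)))"
      using a V
      by (intro prod.cong refl)
         (auto simp: emeasure_uniform_count_measure PiE_iff ennreal_of_nat_eq_real_of_nat
           divide_ennreal)
    finally show ?thesis
      using ennreal_power[of "1 / real (card V)" "card ?I"] by (simp add: measure_def)
  qed
  have "stone_mod ?N E r \<phi> = measure (PiM ?I (\<lambda>_. ?N)) ?D"
    by (simp add: stone_mod_def space_uniform_count_measure)
  also have "\<dots> = (\<Sum>a\<in>?D. measure (PiM ?I (\<lambda>_. ?N)) {a})"
    using \<open>finite ?D\<close> D_sub V
    by (intro measure_eq_sum_singleton)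
       (auto intro!: sets_PiM_uniform_count_measure finite_fv)
  also have "\<dots> = (\<Sum>a\<in>?D. (1 / real (card V)) ^ card ?I)"
    using D_sub point by (intro sum.cong) auto
  also have "\<dots> = stone_fin V E r \<phi>"
    by (simp add: stone_fin_def power_one_over divide_inverse power_inverse)
  finally show ?thesis ..
qed

lemma stone_fin_bounds:
  assumes "finite V" "V \<noteq> {}"
  shows "0 \<le> stone_fin V E r \<phi>" "stone_fin V E r \<phi> \<le> 1"
  using stone_mod_bounds[OF prob_space_uniform_count_measure[OF assms]]
  by (simp_all add: stone_fin_eq_stone_mod[OF assms])

text \<open>The root becomes a fresh variable y, which a measurable section then fixes to r; the
  conjunct y = y keeps y free even when Root does not occur.\<close>
lemma definable_measurable_rooted:
  assumes meas: "definable_measurable graph_fm N E undefined" and r: "r \<in> space N"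
  shows "definable_measurable (\<lambda>_. True) N E r"
  unfolding definable_measurable_def
proof (intro allI impI)
  fix \<phi>
  let ?y = "var_bound \<phi>" and ?I = "fv \<phi>" and ?S = "space N"
  define \<phi>' where "\<phi>' = Conj (subst_root ?y \<phi>) (Eq (Var ?y) (Var ?y))"
  have fv': "fv \<phi>' = insert ?y ?I"
    using fv_subset_fv_subst_root[of \<phi> ?y] fv_subst_root_subset[of ?y \<phi>] by (auto simp: \<phi>'_def)
  have "graph_fm \<phi>'" by (simp add: \<phi>'_def graph_fm_subst_root)
  then have meas': "defset ?S E undefined \<phi>' \<in> sets (PiM (insert ?y ?I) (\<lambda>_. N))"
    using meas fv' unfolding definable_measurable_def by metis
  define h where "h a = restrict (a(?y := r)) (insert ?y ?I)" for a
  have h_meas: "h \<in> measurable (PiM ?I (\<lambda>_. N)) (PiM (insert ?y ?I) (\<lambda>_. N))"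
    unfolding h_def using r
    by (intro measurable_restrict) (auto intro: measurable_component_singleton)
  have "sat ?S E undefined (h a) \<phi>' = sat ?S E r a \<phi>" for a
  proof -
    have "sat ?S E undefined (h a) \<phi>' = sat ?S E undefined (a(?y := r)) (subst_root ?y \<phi>)"
      using fv_subst_root_subset[of ?y \<phi>]
      by (subst sat_cong_fv[where b = "a(?y := r)"]) (auto simp: h_def fv' \<phi>'_def)
    then show ?thesis using sat_subst_fresh_root[OF var_bound_fresh] by simp
  qed
  moreover have "h a \<in> insert ?y ?I \<rightarrow>\<^sub>E ?S" if "a \<in> ?I \<rightarrow>\<^sub>E ?S" for a
    using that r by (auto simp: h_def)
  ultimately have "defset ?S E r \<phi> = h -` defset ?S E undefined \<phi>' \<inter> space (PiM ?I (\<lambda>_. N))"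
    by (auto simp: defset_def space_PiM_const fv')
  then show "defset ?S E r \<phi> \<in> sets (PiM ?I (\<lambda>_. N))"
    using measurable_sets[OF h_meas meas'] by simp
qed

section \<open>Formulas built from a one-variable formula\<close>

fun ex_prefix :: "nat \<Rightarrow> fm \<Rightarrow> fm" where
  "ex_prefix 0 \<phi> = \<phi>"
| "ex_prefix (Suc j) \<phi> = ex_prefix j (Ex j \<phi>)"

lemma sat_ex_prefix:
  "sat V E r a (ex_prefix j \<phi>) \<longleftrightarrow>
     (\<exists>w. (\<forall>i<j. w i \<in> V) \<and> sat V E r (\<lambda>u. if u < j then w u else a u) \<phi>)"
proof (induction j arbitrary: \<phi>)
  case (Suc j)
  have upd: "(\<lambda>u. if u < j then w u else a u)(j := v) =
      (\<lambda>u. if u < Suc j then (w(j := v)) u else a u)" for w v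
    by (auto simp: fun_eq_iff)
  show ?case
  proof
    assume "sat V E r a (ex_prefix (Suc j) \<phi>)"
    then obtain w v where "\<forall>i<j. w i \<in> V" "v \<in> V"
        "sat V E r (\<lambda>u. if u < Suc j then (w(j := v)) u else a u) \<phi>"
      by (auto simp: Suc.IH upd)
    then show "\<exists>w. (\<forall>i<Suc j. w i \<in> V) \<and> sat V E r (\<lambda>u. if u < Suc j then w u else a u) \<phi>"
      by (intro exI[of _ "w(j := v)"]) (auto simp: less_Suc_eq)
  next
    assume "\<exists>w. (\<forall>i<Suc j. w i \<in> V) \<and> sat V E r (\<lambda>u. if u < Suc j then w u else a u) \<phi>"
    then obtain w where "\<forall>i<Suc j. w i \<in> V"
        "sat V E r (\<lambda>u. if u < Suc j then (w(j := w j)) u else a u) \<phi>"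
      by (metis fun_upd_triv)
    then show "sat V E r a (ex_prefix (Suc j) \<phi>)"
      unfolding upd[symmetric] by (auto simp: Suc.IH intro!: exI[of _ w] bexI[of _ "w j"])
  qed
qed simp

lemma fv_ex_prefix: "fv (ex_prefix j \<phi>) = fv \<phi> - {..<j}"
  by (induction j arbitrary: \<phi>) (auto simp: lessThan_Suc)

lemma graph_fm_ex_prefix: "graph_fm (ex_prefix j \<phi>) = graph_fm \<phi>"
  by (induction j arbitrary: \<phi>) auto

fun differs_from_all :: "nat \<Rightarrow> nat \<Rightarrow> fm" where
  "differs_from_all j 0 = Eq (Var j) (Var j)"
| "differs_from_all j (Suc i) = Conj (differs_from_all j i) (Neg (Eq (Var i) (Var j)))"

lemma sat_differs_from_all: "sat V E r a (differs_from_all j i) \<longleftrightarrow> (\<forall>i'<i. a i' \<noteq> a j)"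
  by (induction i) (auto simp: less_Suc_eq)

lemma fv_differs_from_all: "fv (differs_from_all j i) = insert j {..<i}"
  by (induction i) (auto simp: lessThan_Suc)

lemma graph_fm_differs_from_all: "graph_fm (differs_from_all j i)"
  by (induction i) auto

lemma inj_on_lessThan_iff: "inj_on w {..<j::nat} \<longleftrightarrow> (\<forall>i<j. \<forall>i'<i. w i' \<noteq> w i)"
  by (auto simp: inj_on_def) (metis linorder_neqE_nat)

definition sat_vertices :: "'a set \<Rightarrow> ('a \<Rightarrow> 'a \<Rightarrow> bool) \<Rightarrow> fm \<Rightarrow> 'a set" where
  "sat_vertices V E \<xi> = {v \<in> V. sat V E undefined (\<lambda>_. v) \<xi>}"

text \<open>Renaming by a transposition also renames bound occurrences of y, so nothing is captured.\<close>
definition fm_at :: "fm \<Rightarrow> nat \<Rightarrow> nat \<Rightarrow> fm" where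
  "fm_at \<xi> x y = rename_fm (Transposition.transpose x y) \<xi>"

definition ex_root_fm :: "fm \<Rightarrow> nat \<Rightarrow> fm \<Rightarrow> fm" where
  "ex_root_fm \<xi> x \<Psi> =
     Ex (var_bound \<Psi>) (Conj (fm_at \<xi> x (var_bound \<Psi>)) (subst_root (var_bound \<Psi>) \<Psi>))"

text \<open>The trivial formulas Var i = Var i, rather than Root = Root, keep these formulas in the
  language of graphs.\<close>
fun distinct_sat_fm :: "fm \<Rightarrow> nat \<Rightarrow> nat \<Rightarrow> fm" where
  "distinct_sat_fm \<xi> x 0 = Eq (Var 0) (Var 0)"
| "distinct_sat_fm \<xi> x (Suc j) =
     Conj (distinct_sat_fm \<xi> x j) (Conj (fm_at \<xi> x j) (differs_from_all j j))"

definition at_most_fm :: "fm \<Rightarrow> nat \<Rightarrow> nat \<Rightarrow> fm" where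
  "at_most_fm \<xi> x k = Neg (ex_prefix (Suc k) (distinct_sat_fm \<xi> x (Suc k)))"

context
  fixes \<xi> :: fm and x :: nat
  assumes xi_fv: "fv \<xi> = {x}" and xi_graph: "graph_fm \<xi>"
begin

lemma sat_fm_at: "sat V E r a (fm_at \<xi> x y) = sat V E undefined (\<lambda>_. a y) \<xi>"
proof -
  have "sat V E r a (fm_at \<xi> x y) = sat V E r (a \<circ> Transposition.transpose x y) \<xi>"
    by (simp add: fm_at_def sat_rename_fm inj_transpose)
  also have "\<dots> = sat V E r (\<lambda>_. a y) \<xi>"
    by (rule sat_cong_fv) (simp add: xi_fv)
  finally show ?thesis
    using sat_graph_fm_root[OF xi_graph] by simp
qed

lemma fv_fm_at: "fv (fm_at \<xi> x y) = {y}"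
  by (simp add: fm_at_def fv_rename_fm inj_transpose xi_fv)

lemma graph_fm_fm_at: "graph_fm (fm_at \<xi> x y)"
  by (simp add: fm_at_def graph_fm_rename_fm xi_graph)

lemma sat_ex_root_fm:
  "sat V E r a (ex_root_fm \<xi> x \<Psi>) \<longleftrightarrow> (\<exists>v \<in> sat_vertices V E \<xi>. sat V E v a \<Psi>)"
proof -
  have "sat V E v (a(var_bound \<Psi> := v)) \<Psi> = sat V E v a \<Psi>" for v
    by (rule sat_cong_fv) (use var_bound_fresh in auto)
  then show ?thesis
    by (simp add: ex_root_fm_def sat_vertices_def sat_fm_at sat_subst_root var_bound_fresh; blast)
qed

lemma fv_ex_root_fm: "fv (ex_root_fm \<xi> x \<Psi>) = fv \<Psi>"
  using fv_subset_fv_subst_root[of \<Psi> "var_bound \<Psi>"] fv_subst_root_subset[of "var_bound \<Psi>" \<Psi>]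
    var_bound_fresh[of \<Psi>]
  by (auto simp: ex_root_fm_def fv_fm_at)

lemma graph_fm_ex_root_fm: "graph_fm (ex_root_fm \<xi> x \<Psi>)"
  by (simp add: ex_root_fm_def graph_fm_fm_at graph_fm_subst_root)

lemma defset_ex_root_fm:
  "defset V E r (ex_root_fm \<xi> x \<Psi>) = (\<Union>v \<in> sat_vertices V E \<xi>. defset V E v \<Psi>)"
  by (auto simp: defset_def sat_ex_root_fm fv_ex_root_fm)

lemma stone_fin_ex_root_fm_le:
  assumes "finite V"
  shows "stone_fin V E r (ex_root_fm \<xi> x \<Psi>) \<le> (\<Sum>v \<in> sat_vertices V E \<xi>. stone_fin V E v \<Psi>)"
proof -
  have "finite (sat_vertices V E \<xi>)" using assms by (simp add: sat_vertices_def)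
  then have "card (defset V E r (ex_root_fm \<xi> x \<Psi>)) \<le>
      (\<Sum>v \<in> sat_vertices V E \<xi>. card (defset V E v \<Psi>))"
    unfolding defset_ex_root_fm by (rule card_UN_le)
  then have "real (card (defset V E r (ex_root_fm \<xi> x \<Psi>))) \<le>
      (\<Sum>v \<in> sat_vertices V E \<xi>. real (card (defset V E v \<Psi>)))"
    by (metis of_nat_le_iff of_nat_sum)
  then show ?thesis
    by (simp add: stone_fin_def fv_ex_root_fm divide_right_mono flip: sum_divide_distrib)
qed

lemma stone_fin_ex_root_fm_le_card:
  assumes "finite V" "card (sat_vertices V E \<xi>) \<le> k" "0 \<le> c"
    and "\<And>v. v \<in> sat_vertices V E \<xi> \<Longrightarrow> stone_fin V E v \<Psi> \<le> c"
  shows "stone_fin V E r (ex_root_fm \<xi> x \<Psi>) \<le> k * c"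
proof -
  have "stone_fin V E r (ex_root_fm \<xi> x \<Psi>) \<le> (\<Sum>v \<in> sat_vertices V E \<xi>. stone_fin V E v \<Psi>)"
    by (rule stone_fin_ex_root_fm_le[OF assms(1)])
  also have "\<dots> \<le> card (sat_vertices V E \<xi>) * c"
    using sum_mono[of _ _ "\<lambda>_. c", OF assms(4)] by simp
  also have "\<dots> \<le> k * c"
    using assms(2,3) by (simp add: mult_right_mono)
  finally show ?thesis .
qed

lemma stone_mod_ex_root_fm_ge:
  assumes prob: "prob_space N" and meas: "definable_measurable graph_fm N E undefined"
    and r: "r \<in> sat_vertices (space N) E \<xi>"
  shows "stone_mod N E r \<Psi> \<le> stone_mod N E undefined (ex_root_fm \<xi> x \<Psi>)"
proof -
  interpret prob_space "PiM (fv \<Psi>) (\<lambda>_. N)" by (rule prob_space_PiM) (rule prob)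
  have "defset (space N) E undefined (ex_root_fm \<xi> x \<Psi>) \<in> sets (PiM (fv \<Psi>) (\<lambda>_. N))"
    using meas graph_fm_ex_root_fm fv_ex_root_fm unfolding definable_measurable_def by metis
  moreover have "defset (space N) E r \<Psi> \<subseteq> defset (space N) E undefined (ex_root_fm \<xi> x \<Psi>)"
    unfolding defset_ex_root_fm using r by blast
  ultimately show ?thesis
    unfolding stone_mod_def fv_ex_root_fm by (intro finite_measure_mono)
qed

lemma sat_distinct_sat_fm:
  "sat V E r a (distinct_sat_fm \<xi> x j) \<longleftrightarrow>
     (\<forall>i<j. sat V E undefined (\<lambda>_. a i) \<xi>) \<and> (\<forall>i<j. \<forall>i'<i. a i' \<noteq> a i)"
  by (induction j) (auto simp: sat_fm_at sat_differs_from_all less_Suc_eq)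

lemma fv_distinct_sat_fm: "fv (distinct_sat_fm \<xi> x (Suc j)) \<subseteq> {..j}"
  by (induction j) (auto simp: fv_fm_at fv_differs_from_all)

lemma graph_fm_distinct_sat_fm: "graph_fm (distinct_sat_fm \<xi> x j)"
  by (induction j) (simp_all add: graph_fm_fm_at graph_fm_differs_from_all)

lemma fv_at_most_fm: "fv (at_most_fm \<xi> x k) = {}"
  using fv_distinct_sat_fm[of k] by (auto simp: at_most_fm_def fv_ex_prefix)

lemma graph_fm_at_most_fm: "graph_fm (at_most_fm \<xi> x k)"
  by (simp add: at_most_fm_def graph_fm_ex_prefix graph_fm_distinct_sat_fm
      del: distinct_sat_fm.simps)

lemma sat_at_most_fm:
  assumes "finite (sat_vertices V E \<xi>)"
  shows "sat V E r a (at_most_fm \<xi> x k) \<longleftrightarrow> card (sat_vertices V E \<xi>) \<le> k"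
proof -
  have "sat V E r a (at_most_fm \<xi> x k) \<longleftrightarrow> \<not> (\<exists>w. (\<forall>i<Suc k. w i \<in> V) \<and>
      (\<forall>i<Suc k. sat V E undefined (\<lambda>_. w i) \<xi>) \<and> (\<forall>i<Suc k. \<forall>i'<i. w i' \<noteq> w i))"
  proof -
    have "sat V E r (\<lambda>u. if u < Suc k then w u else a u) (distinct_sat_fm \<xi> x (Suc k)) \<longleftrightarrow>
        (\<forall>i<Suc k. sat V E undefined (\<lambda>_. w i) \<xi>) \<and> (\<forall>i<Suc k. \<forall>i'<i. w i' \<noteq> w i)" for w
      unfolding sat_distinct_sat_fm by auto
    then show ?thesis by (simp only: at_most_fm_def sat.simps sat_ex_prefix)
  qed
  also have "\<dots> \<longleftrightarrow> \<not> (\<exists>w. inj_on w {..<Suc k} \<and> w ` {..<Suc k} \<subseteq> sat_vertices V E \<xi>)"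
    by (simp add: inj_on_lessThan_iff image_subset_iff sat_vertices_def) blast
  also have "\<dots> \<longleftrightarrow> \<not> Suc k \<le> card (sat_vertices V E \<xi>)"
    using inj_on_iff_card_le[OF finite_lessThan assms] by simp
  finally show ?thesis by linarith
qed

end

section \<open>Peaking products of Bernstein monomials\<close>

definition bernstein_mono :: "nat \<Rightarrow> nat \<Rightarrow> real \<Rightarrow> real" where
  "bernstein_mono a b z = z ^ a * (1 - z) ^ b"

definition bernstein_weight :: "('c \<Rightarrow> nat) \<Rightarrow> ('c \<Rightarrow> nat) \<Rightarrow> 'c set \<Rightarrow> ('c \<Rightarrow> real) \<Rightarrow> real" where
  "bernstein_weight a b F t = (\<Prod>\<phi>\<in>F. bernstein_mono (a \<phi>) (b \<phi>) (t \<phi>))"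

lemma weighted_am_gm_power:
  fixes u v :: real and a b D :: nat
  assumes uv: "0 \<le> u" "0 \<le> v" and D: "a + b = D" "0 < D"
  shows "u ^ a * v ^ b \<le> (a / D) ^ a * (b / D) ^ b * (u + v) ^ D"
proof (cases "a = 0 \<or> b = 0")
  case True
  then show ?thesis
    using uv D by (auto simp: power_mono)
next
  case ab: False
  show ?thesis
  proof (cases "u = 0 \<or> v = 0")
    case True
    then show ?thesis using ab uv by (auto simp: power_0_left)
  next
    case False
    define \<alpha> where "\<alpha> = real a / D"
    define \<beta> where "\<beta> = real b / D"
    have \<alpha>\<beta>: "0 < \<alpha>" "0 < \<beta>" "\<alpha> + \<beta> = 1"
      using ab D by (auto simp: \<alpha>_def \<beta>_def field_simps)
    have uv_pos: "0 < u" "0 < v" using False uv by auto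
    have pow: "(y powr (real c / D)) ^ D = y ^ c" if "0 < y" for y :: real and c :: nat
      using that D by (simp add: powr_realpow[symmetric] powr_powr)
    have "(u / \<alpha>) powr \<alpha> * (v / \<beta>) powr \<beta> \<le> \<alpha> * (u / \<alpha>) + \<beta> * (v / \<beta>)"
      using \<alpha>\<beta> uv_pos by (intro Youngs_inequality_0) auto
    then have "((u / \<alpha>) powr \<alpha> * (v / \<beta>) powr \<beta>) ^ D \<le> (u + v) ^ D"
      using \<alpha>\<beta> by (intro power_mono) auto
    moreover have "((u / \<alpha>) powr \<alpha> * (v / \<beta>) powr \<beta>) ^ D = (u / \<alpha>) ^ a * (v / \<beta>) ^ b"
      using pow[OF divide_pos_pos[OF uv_pos(1) \<alpha>\<beta>(1)], of a, folded \<alpha>_def]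
        pow[OF divide_pos_pos[OF uv_pos(2) \<alpha>\<beta>(2)], of b, folded \<beta>_def]
      by (simp only: power_mult_distrib)
    ultimately have "u ^ a * v ^ b / (\<alpha> ^ a * \<beta> ^ b) \<le> (u + v) ^ D"
      by (simp add: power_divide)
    then have "u ^ a * v ^ b \<le> \<alpha> ^ a * \<beta> ^ b * (u + v) ^ D"
      using \<alpha>\<beta> by (simp add: divide_le_eq mult.commute)
    then show ?thesis by (simp add: \<alpha>_def \<beta>_def)
  qed
qed

lemma hellinger_affinity_le:
  fixes q z :: real
  assumes q: "0 \<le> q" "q \<le> 1" and z: "0 \<le> z" "z \<le> 1"
  shows "sqrt (q * z) + sqrt ((1 - q) * (1 - z)) \<le> 1 - (q - z)\<^sup>2 / 8"
proof -
  define s t s' t' where "s = sqrt q" "t = sqrt z" "s' = sqrt (1 - q)" "t' = sqrt (1 - z)"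
  have sq: "s\<^sup>2 = q" "t\<^sup>2 = z" "s'\<^sup>2 = 1 - q" "t'\<^sup>2 = 1 - z"
    using q z by (simp_all add: s_t_s'_t'_def)
  have "(q - z)\<^sup>2 = (s - t)\<^sup>2 * (s + t)\<^sup>2"
    using sq by (simp add: power2_eq_square algebra_simps)
  also have "\<dots> \<le> (s - t)\<^sup>2 * 4"
  proof -
    have "s \<le> 1" "t \<le> 1" "0 \<le> s + t" using q z by (auto simp: s_t_s'_t'_def)
    then have "s + t \<le> 2" "0 \<le> s + t" by auto
    then have "(s + t)\<^sup>2 \<le> 2\<^sup>2" by (rule power_mono)
    then show ?thesis by (simp add: mult_left_mono)
  qed
  finally have "(q - z)\<^sup>2 \<le> (s - t)\<^sup>2 * 4" .
  moreover have "2 - 2 * (s * t + s' * t') = (s - t)\<^sup>2 + (s' - t')\<^sup>2"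
    using sq by (simp add: power2_eq_square algebra_simps)
  moreover have "sqrt (q * z) + sqrt ((1 - q) * (1 - z)) = s * t + s' * t'"
    by (simp add: s_t_s'_t'_def real_sqrt_mult)
  moreover have "\<And>x y w m :: real. x \<le> y * 4 \<Longrightarrow> 0 \<le> w \<Longrightarrow> 2 - 2 * m = y + w \<Longrightarrow> m \<le> 1 - x / 8"
    by linarith
  ultimately show ?thesis
    using zero_le_power2[of "s' - t'"] by metis
qed

lemma bernstein_mono_nonneg: "0 \<le> z \<Longrightarrow> z \<le> 1 \<Longrightarrow> 0 \<le> bernstein_mono a b z"
  by (simp add: bernstein_mono_def)

lemma bernstein_mono_mode_pos:
  fixes a b D :: nat
  assumes "a + b = D" "0 < D"
  shows "0 < bernstein_mono a b (a / D)"
proof -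
  have "0 < (real a / D) ^ a" using assms by (cases "a = 0") auto
  moreover have "0 < (1 - real a / D) ^ b"
    using assms by (cases "b = 0") (auto simp: field_simps)
  ultimately show ?thesis by (simp add: bernstein_mono_def)
qed

text \<open>Weighted AM-GM for u = sqrt (z q) and v = sqrt ((1 - z) (1 - q)), squared, bounds
  f z * f q by f q ^ 2 * (u + v) ^ (2 D) for f = bernstein_mono a b; the Hellinger bound
  controls u + v.\<close>
lemma bernstein_mono_le_mode:
  fixes a b D :: nat
  assumes D: "a + b = D" "0 < D" and z: "0 \<le> z" "z \<le> 1"
  shows "bernstein_mono a b z \<le> bernstein_mono a b (a / D) * (1 - (a / D - z)\<^sup>2 / 8) ^ (2 * D)"
proof -
  define q where "q = real a / D"
  have q: "0 \<le> q" "q \<le> 1" "real b / D = 1 - q" using D by (auto simp: q_def field_simps)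
  define u v where "u = sqrt (z * q)" and "v = sqrt ((1 - z) * (1 - q))"
  have uv: "0 \<le> u" "0 \<le> v" using q z by (auto simp: u_def v_def)
  have "u ^ a * v ^ b \<le> q ^ a * (1 - q) ^ b * (u + v) ^ D"
    using weighted_am_gm_power[OF uv D] by (simp add: q q_def)
  then have "(u ^ a * v ^ b)\<^sup>2 \<le> (q ^ a * (1 - q) ^ b * (u + v) ^ D)\<^sup>2"
    using uv by (intro power_mono) auto
  moreover have "(u ^ a * v ^ b)\<^sup>2 = bernstein_mono a b z * bernstein_mono a b q"
  proof -
    have "u\<^sup>2 = z * q" "v\<^sup>2 = (1 - z) * (1 - q)" using q z by (auto simp: u_def v_def)
    then show ?thesis
      by (simp add: bernstein_mono_def power_mult_distrib power_mult[symmetric]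
          mult.commute[of _ 2] power_mult)
  qed
  moreover have "(q ^ a * (1 - q) ^ b * (u + v) ^ D)\<^sup>2 =
      bernstein_mono a b q * (bernstein_mono a b q * (u + v) ^ (2 * D))"
    by (simp add: bernstein_mono_def power_mult_distrib power_mult algebra_simps power2_eq_square)
  ultimately have "bernstein_mono a b z \<le> bernstein_mono a b q * (u + v) ^ (2 * D)"
    using bernstein_mono_mode_pos[OF D] by (simp add: q_def mult.commute)
  also have "\<dots> \<le> bernstein_mono a b q * (1 - (q - z)\<^sup>2 / 8) ^ (2 * D)"
    using hellinger_affinity_le[OF q(1,2) z] uv bernstein_mono_mode_pos[OF D]
    by (intro mult_left_mono power_mono) (auto simp: u_def v_def mult.commute q_def)
  finally show ?thesis by (simp add: q_def)
qed

text \<open>Weighted AM-GM for u = q^2 / p and v = (1 - q)^2 / (1 - p).\<close>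
lemma bernstein_mono_mode_le:
  fixes a b D :: nat
  assumes D: "a + b = D" "0 < D" and p: "0 < p" "p < 1"
  shows "bernstein_mono a b (a / D) \<le>
    bernstein_mono a b p * (1 + (a / D - p)\<^sup>2 / (p * (1 - p))) ^ D"
proof -
  define q where "q = real a / D"
  have q: "0 \<le> q" "q \<le> 1" "real b / D = 1 - q" using D by (auto simp: q_def field_simps)
  define u v where "u = q\<^sup>2 / p" and "v = (1 - q)\<^sup>2 / (1 - p)"
  have uv: "0 \<le> u" "0 \<le> v" using q p by (auto simp: u_def v_def)
  have fp: "0 < bernstein_mono a b p" using p by (simp add: bernstein_mono_def)
  have "bernstein_mono a b q * bernstein_mono a b q / bernstein_mono a b p = u ^ a * v ^ b"
    by (simp add: u_def v_def bernstein_mono_def power_divide power_mult_distrib power2_eq_square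
        flip: power_mult)
  also have "\<dots> \<le> bernstein_mono a b q * (u + v) ^ D"
    using weighted_am_gm_power[OF uv D] by (simp add: q q_def bernstein_mono_def)
  finally have "bernstein_mono a b q \<le> bernstein_mono a b p * (u + v) ^ D"
    using fp bernstein_mono_mode_pos[OF D] by (simp add: divide_le_eq mult.commute q_def)
  moreover have "u + v = 1 + (q - p)\<^sup>2 / (p * (1 - p))"
    using p by (simp add: u_def v_def field_simps power2_eq_square)
  ultimately show ?thesis by (simp add: q_def)
qed

lemma nat_floor_mult_le:
  assumes "0 \<le> p" "p \<le> 1"
  shows "nat \<lfloor>p * real D\<rfloor> \<le> D"
proof -
  have "p * real D \<le> real D" using assms by (simp add: mult_left_le_one_le)
  then have "\<lfloor>p * real D\<rfloor> \<le> int D" by linarith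
  then show ?thesis by simp
qed

lemma nat_floor_mult_close:
  fixes p :: real and D :: nat
  assumes "0 \<le> p" "0 < D"
  shows "\<bar>real (nat \<lfloor>p * D\<rfloor>) / D - p\<bar> \<le> 1 / D"
proof -
  have "\<bar>real (nat \<lfloor>p * D\<rfloor>) - p * D\<bar> \<le> 1"
    using assms by (simp add: abs_le_iff) linarith
  moreover have "real (nat \<lfloor>p * D\<rfloor>) / D - p = (real (nat \<lfloor>p * D\<rfloor>) - p * D) / D"
    using assms by (simp add: field_simps)
  ultimately show ?thesis
    using assms by (simp add: abs_divide divide_right_mono del: of_int_floor_le)
qed

lemma one_plus_power_le_exp_1:
  fixes x :: real
  assumes "0 \<le> x" "n * x \<le> 1"
  shows "(1 + x) ^ n \<le> exp 1"
proof -
  have "(1 + x) ^ n \<le> exp x ^ n"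
    using assms by (intro power_mono) (auto simp: exp_ge_add_one_self)
  also have "\<dots> = exp (n * x)" by (simp add: exp_of_nat_mult)
  also have "\<dots> \<le> exp 1" using assms by simp
  finally show ?thesis .
qed

lemma bernstein_mono_rounded_mode:
  fixes p :: real and D :: nat
  assumes p: "0 \<le> p" "p \<le> 1" and D: "0 < D"
    and Dp: "0 < p \<Longrightarrow> p < 1 \<Longrightarrow> 1 \<le> D * (p * (1 - p))"
  defines "a \<equiv> nat \<lfloor>p * D\<rfloor>"
  shows "0 < bernstein_mono a (D - a) p"
    and "bernstein_mono a (D - a) (a / D) \<le> exp 1 * bernstein_mono a (D - a) p"
proof -
  have ab: "a + (D - a) = D" using nat_floor_mult_le[OF p] by (simp add: a_def)
  have "0 < bernstein_mono a (D - a) p \<and>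
      bernstein_mono a (D - a) (a / D) \<le> exp 1 * bernstein_mono a (D - a) p"
  proof (cases "p = 0 \<or> p = 1")
    case True
    then have "real a / D = p" using D by (auto simp: a_def)
    then have pos: "0 < bernstein_mono a (D - a) p" using bernstein_mono_mode_pos[OF ab D] by simp
    have "1 * bernstein_mono a (D - a) p \<le> exp 1 * bernstein_mono a (D - a) p"
      using pos by (intro mult_right_mono) auto
    then show ?thesis using pos \<open>real a / D = p\<close> by simp
  next
    case False
    then have p': "0 < p" "p < 1" using p by auto
    define x where "x = (a / D - p)\<^sup>2 / (p * (1 - p))"
    have "(a / D - p)\<^sup>2 \<le> (1 / D)\<^sup>2"
      using nat_floor_mult_close[OF p(1) D] abs_le_square_iff[of "a / D - p" "1 / D"]
      by (simp add: a_def)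
    then have "D * x \<le> D * ((1 / D)\<^sup>2 / (p * (1 - p)))"
      using p' unfolding x_def by (intro mult_left_mono divide_right_mono) auto
    also have "\<dots> = 1 / (D * (p * (1 - p)))"
      using p' D by (simp add: power2_eq_square field_simps)
    also have "\<dots> \<le> 1" using Dp[OF p'] by simp
    finally have "D * x \<le> 1" .
    then have "(1 + x) ^ D \<le> exp 1"
      using p' by (intro one_plus_power_le_exp_1) (auto simp: x_def)
    moreover have pos: "0 < bernstein_mono a (D - a) p" using p' by (simp add: bernstein_mono_def)
    ultimately have "bernstein_mono a (D - a) p * (1 + x) ^ D \<le> exp 1 * bernstein_mono a (D - a) p"
      by (simp add: mult.commute)
    then show ?thesis
      using bernstein_mono_mode_le[OF ab D p'] pos unfolding x_def by linarith
  qed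
  then show "0 < bernstein_mono a (D - a) p"
    and "bernstein_mono a (D - a) (a / D) \<le> exp 1 * bernstein_mono a (D - a) p" by auto
qed

lemma bernstein_mono_rounded_bounds:
  fixes p z \<eta> :: real and D :: nat
  assumes p: "0 \<le> p" "p \<le> 1" and D: "0 < D" and Dp: "0 < p \<Longrightarrow> p < 1 \<Longrightarrow> 1 \<le> D * (p * (1 - p))"
    and z: "0 \<le> z" "z \<le> 1"
  defines "a \<equiv> nat \<lfloor>p * D\<rfloor>"
  shows "bernstein_mono a (D - a) z \<le> exp 1 * bernstein_mono a (D - a) p"
    and "0 \<le> \<eta> \<Longrightarrow> \<eta> + 1 / D \<le> \<bar>z - p\<bar> \<Longrightarrow>
      bernstein_mono a (D - a) z \<le> exp 1 * bernstein_mono a (D - a) p * (1 - \<eta>\<^sup>2 / 8) ^ (2 * D)"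
proof -
  let ?q = "real a / D" and ?f = "bernstein_mono a (D - a)"
  have ab: "a + (D - a) = D" using nat_floor_mult_le[OF p] by (simp add: a_def)
  have "0 \<le> ?q" "?q \<le> 1" using ab D by (simp_all add: field_simps)
  then have "\<bar>?q - z\<bar> \<le> \<bar>1\<bar>" using z unfolding abs_le_iff by linarith
  then have "(?q - z)\<^sup>2 \<le> 1" by (simp only: abs_le_square_iff) simp
  then have w: "0 \<le> 1 - (?q - z)\<^sup>2 / 8" "1 - (?q - z)\<^sup>2 / 8 \<le> 1" by auto
  have fp: "0 \<le> exp 1 * ?f p"
    using bernstein_mono_rounded_mode(1)[OF p D Dp, folded a_def] by simp
  have "?f z \<le> ?f ?q * (1 - (?q - z)\<^sup>2 / 8) ^ (2 * D)"
    by (rule bernstein_mono_le_mode[OF ab D z])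
  also have "\<dots> \<le> exp 1 * ?f p * (1 - (?q - z)\<^sup>2 / 8) ^ (2 * D)"
    using bernstein_mono_rounded_mode(2)[OF p D Dp, folded a_def] w(1)
    by (intro mult_right_mono) simp_all
  finally have main: "?f z \<le> exp 1 * ?f p * (1 - (?q - z)\<^sup>2 / 8) ^ (2 * D)" .
  from mult_left_mono[OF power_le_one[OF w, of "2 * D"] fp] main
  show "?f z \<le> exp 1 * ?f p" by linarith
  assume \<eta>: "0 \<le> \<eta>" "\<eta> + 1 / D \<le> \<bar>z - p\<bar>"
  have "\<eta> \<le> \<bar>?q - z\<bar>"
    using \<eta>(2) nat_floor_mult_close[OF p(1) D] by (simp add: a_def)
  then have "\<eta>\<^sup>2 \<le> (?q - z)\<^sup>2"
    using \<eta>(1) abs_le_square_iff[of \<eta> "?q - z"] by simp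
  then have "(1 - (?q - z)\<^sup>2 / 8) ^ (2 * D) \<le> (1 - \<eta>\<^sup>2 / 8) ^ (2 * D)"
    using w by (intro power_mono) auto
  from mult_left_mono[OF this fp] main
  show "?f z \<le> exp 1 * ?f p * (1 - \<eta>\<^sup>2 / 8) ^ (2 * D)" by linarith
qed

lemma prod_le_by_one_factor:
  fixes f g :: "'c \<Rightarrow> real"
  assumes F: "finite F" "j \<in> F" and fg: "\<And>i. i \<in> F \<Longrightarrow> 0 \<le> f i \<and> f i \<le> g i"
    and fj: "f j \<le> c * g j"
  shows "prod f F \<le> c * prod g F"
proof -
  have "prod f F = f j * prod f (F - {j})" using F by (simp add: prod.remove)
  also have "\<dots> \<le> (c * g j) * prod g (F - {j})"
    using fg fj F by (intro mult_mono prod_mono prod_nonneg) (auto intro: order_trans)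
  also have "\<dots> = c * prod g F" using F by (simp add: prod.remove)
  finally show ?thesis .
qed

lemma bernstein_weight_rounded:
  fixes p t :: "'c \<Rightarrow> real" and D :: nat
  assumes F: "finite F" and p: "\<And>\<phi>. \<phi> \<in> F \<Longrightarrow> 0 \<le> p \<phi> \<and> p \<phi> \<le> 1" and D: "0 < D"
    and Dp: "\<And>\<phi>. \<phi> \<in> F \<Longrightarrow> 0 < p \<phi> \<Longrightarrow> p \<phi> < 1 \<Longrightarrow> 1 \<le> D * (p \<phi> * (1 - p \<phi>))"
  defines "a \<equiv> \<lambda>\<phi>. nat \<lfloor>p \<phi> * D\<rfloor>" and "b \<equiv> \<lambda>\<phi>. D - nat \<lfloor>p \<phi> * D\<rfloor>"
  shows "0 < bernstein_weight a b F p"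
    and "(\<And>\<psi>. \<psi> \<in> F \<Longrightarrow> 0 \<le> t \<psi> \<and> t \<psi> \<le> 1) \<Longrightarrow> \<phi> \<in> F \<Longrightarrow> 0 \<le> \<eta> \<Longrightarrow>
      \<eta> + 1 / D \<le> \<bar>t \<phi> - p \<phi>\<bar> \<Longrightarrow>
      bernstein_weight a b F t \<le>
        exp 1 ^ card F * (1 - \<eta>\<^sup>2 / 8) ^ (2 * D) * bernstein_weight a b F p"
proof -
  show "0 < bernstein_weight a b F p"
    unfolding bernstein_weight_def a_def b_def
    using bernstein_mono_rounded_mode(1)[OF _ _ D Dp] p by (intro prod_pos) auto
  assume t: "\<And>\<psi>. \<psi> \<in> F \<Longrightarrow> 0 \<le> t \<psi> \<and> t \<psi> \<le> 1"
    and \<phi>: "\<phi> \<in> F" "0 \<le> \<eta>" "\<eta> + 1 / D \<le> \<bar>t \<phi> - p \<phi>\<bar>"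
  have "bernstein_weight a b F t \<le>
      (1 - \<eta>\<^sup>2 / 8) ^ (2 * D) * (\<Prod>\<psi>\<in>F. exp 1 * bernstein_mono (a \<psi>) (b \<psi>) (p \<psi>))"
    unfolding bernstein_weight_def
  proof (rule prod_le_by_one_factor[OF F \<phi>(1)])
    fix \<psi> assume "\<psi> \<in> F"
    then show "0 \<le> bernstein_mono (a \<psi>) (b \<psi>) (t \<psi>) \<and>
        bernstein_mono (a \<psi>) (b \<psi>) (t \<psi>) \<le> exp 1 * bernstein_mono (a \<psi>) (b \<psi>) (p \<psi>)"
      using bernstein_mono_rounded_bounds(1)[OF _ _ D Dp] p t bernstein_mono_nonneg
      by (simp add: a_def b_def)
  next
    show "bernstein_mono (a \<phi>) (b \<phi>) (t \<phi>) \<le>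
        (1 - \<eta>\<^sup>2 / 8) ^ (2 * D) * (exp 1 * bernstein_mono (a \<phi>) (b \<phi>) (p \<phi>))"
      using bernstein_mono_rounded_bounds(2)[OF _ _ D Dp _ _ \<phi>(2,3)] p t \<phi>(1)
      by (simp add: a_def b_def mult.commute)
  qed
  also have "\<dots> = exp 1 ^ card F * (1 - \<eta>\<^sup>2 / 8) ^ (2 * D) * bernstein_weight a b F p"
    by (simp add: bernstein_weight_def prod.distrib)
  finally show "bernstein_weight a b F t \<le>
      exp 1 ^ card F * (1 - \<eta>\<^sup>2 / 8) ^ (2 * D) * bernstein_weight a b F p" .
qed

lemma eventually_ge_real_sequentially: "eventually (\<lambda>D::nat. c \<le> real D) sequentially"
  using filterlim_real_sequentially by (simp add: filterlim_at_top)

lemma eventually_variance_mult_ge_1: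
  fixes p :: "'c \<Rightarrow> real"
  assumes "finite F"
  shows "eventually (\<lambda>D::nat. \<forall>\<phi>\<in>F. 0 < p \<phi> \<longrightarrow> p \<phi> < 1 \<longrightarrow> 1 \<le> D * (p \<phi> * (1 - p \<phi>)))
    sequentially"
proof (rule eventually_ball_finite[OF assms], intro ballI)
  fix \<phi>
  show "eventually (\<lambda>D::nat. 0 < p \<phi> \<longrightarrow> p \<phi> < 1 \<longrightarrow> 1 \<le> D * (p \<phi> * (1 - p \<phi>))) sequentially"
    using eventually_ge_real_sequentially[of "1 / (p \<phi> * (1 - p \<phi>))"]
    by eventually_elim (auto simp: field_simps)
qed

lemma bernstein_weight_peak:
  fixes p :: "'c \<Rightarrow> real"
  assumes F: "finite F" and p: "\<And>\<phi>. \<phi> \<in> F \<Longrightarrow> 0 \<le> p \<phi> \<and> p \<phi> \<le> 1"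
    and \<epsilon>: "0 < \<epsilon>" and \<delta>: "0 < \<delta>"
  obtains a b where "0 < bernstein_weight a b F p"
    and "\<And>t \<phi>. (\<And>\<psi>. \<psi> \<in> F \<Longrightarrow> 0 \<le> t \<psi> \<and> t \<psi> \<le> 1) \<Longrightarrow> \<phi> \<in> F \<Longrightarrow> \<epsilon> \<le> \<bar>t \<phi> - p \<phi>\<bar> \<Longrightarrow>
           bernstein_weight a b F t \<le> \<delta> * bernstein_weight a b F p"
proof -
  define \<eta> where "\<eta> = min \<epsilon> 1 / 2"
  define \<theta> where "\<theta> = 1 - \<eta>\<^sup>2 / 8"
  have \<eta>: "0 < \<eta>" "2 * \<eta> \<le> \<epsilon>" "\<eta> \<le> 1" using \<epsilon> by (auto simp: \<eta>_def)
  then have "0 \<le> \<theta>" "\<theta> < 1" using power_le_one[of \<eta> 2] by (auto simp: \<theta>_def)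
  then have "(\<lambda>D. exp 1 ^ card F * (\<theta>\<^sup>2) ^ D) \<longlonglongrightarrow> exp 1 ^ card F * 0"
    by (intro tendsto_mult tendsto_const LIMSEQ_power_zero) (simp add: abs_square_less_1)
  then have "eventually (\<lambda>D. exp 1 ^ card F * \<theta> ^ (2 * D) < \<delta>) sequentially"
    using \<delta> by (simp add: order_tendsto_iff power_mult)
  moreover note eventually_variance_mult_ge_1[OF F, of p] eventually_ge_real_sequentially[of "1 / \<eta>"]
  ultimately have "eventually (\<lambda>D. exp 1 ^ card F * \<theta> ^ (2 * D) < \<delta> \<and> 1 / \<eta> \<le> D \<and>
      (\<forall>\<phi>\<in>F. 0 < p \<phi> \<longrightarrow> p \<phi> < 1 \<longrightarrow> 1 \<le> D * (p \<phi> * (1 - p \<phi>)))) sequentially"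
    by eventually_elim blast
  then obtain D :: nat where D: "exp 1 ^ card F * \<theta> ^ (2 * D) < \<delta>" "1 / \<eta> \<le> D"
      "\<And>\<phi>. \<phi> \<in> F \<Longrightarrow> 0 < p \<phi> \<Longrightarrow> p \<phi> < 1 \<Longrightarrow> 1 \<le> D * (p \<phi> * (1 - p \<phi>))"
    unfolding eventually_sequentially by blast
  then have D_pos: "0 < D"
    using \<eta>(1) by (metis of_nat_0_less_iff order_less_le_trans zero_less_divide_1_iff)
  have "1 / D \<le> \<eta>"
    using D(2) \<eta>(1) D_pos by (simp add: divide_le_eq mult.commute)
  define a b where "a = (\<lambda>\<phi>. nat \<lfloor>p \<phi> * real D\<rfloor>)" and "b = (\<lambda>\<phi>. D - nat \<lfloor>p \<phi> * real D\<rfloor>)"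
  have pos: "0 < bernstein_weight a b F p"
    using bernstein_weight_rounded(1)[of F p D] F p D_pos D(3) unfolding a_def b_def by blast
  show thesis
  proof (rule that[OF pos])
    fix t \<phi> assume t: "\<And>\<psi>. \<psi> \<in> F \<Longrightarrow> 0 \<le> t \<psi> \<and> t \<psi> \<le> 1" and \<phi>: "\<phi> \<in> F" "\<epsilon> \<le> \<bar>t \<phi> - p \<phi>\<bar>"
    have "\<eta> + 1 / D \<le> \<bar>t \<phi> - p \<phi>\<bar>" using \<open>1 / D \<le> \<eta>\<close> \<eta>(2) \<phi>(2) by linarith
    then have "bernstein_weight a b F t \<le> exp 1 ^ card F * \<theta> ^ (2 * D) * bernstein_weight a b F p"
      using bernstein_weight_rounded(2)
          [where F = F and p = p and D = D and t = t and \<phi> = \<phi> and \<eta> = \<eta>]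
        F p D_pos D(3) t \<phi>(1) \<eta>(1) unfolding a_def b_def \<theta>_def by fastforce
    also have "\<dots> \<le> \<delta> * bernstein_weight a b F p"
      using D(1) pos by (intro mult_right_mono) auto
    finally show "bernstein_weight a b F t \<le> \<delta> * bernstein_weight a b F p" .
  qed
qed

section \<open>Independent conjunctions\<close>

definition true_fm :: fm where
  "true_fm = Eq Root Root"

text \<open>The second conjunct is shifted beyond all variables of the first, so the conjuncts are
  independent events under the product measure.\<close>
definition indep_conj :: "fm \<Rightarrow> fm \<Rightarrow> fm" where
  "indep_conj \<phi> \<psi> = Conj \<phi> (rename_fm (\<lambda>u. var_bound \<phi> + u) \<psi>)"

fun indep_power :: "fm \<Rightarrow> nat \<Rightarrow> fm" where
  "indep_power \<phi> 0 = true_fm"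
| "indep_power \<phi> (Suc n) = indep_conj \<phi> (indep_power \<phi> n)"

fun bernstein_fm :: "(fm \<Rightarrow> nat) \<Rightarrow> (fm \<Rightarrow> nat) \<Rightarrow> fm list \<Rightarrow> fm" where
  "bernstein_fm a b [] = true_fm"
| "bernstein_fm a b (\<phi> # \<phi>s) =
     indep_conj (indep_power \<phi> (a \<phi>))
       (indep_conj (indep_power (Neg \<phi>) (b \<phi>)) (bernstein_fm a b \<phi>s))"

lemma stone_mod_true_fm: "stone_mod N E r true_fm = 1"
  by (simp add: stone_mod_sentence true_fm_def)

lemma definable_measurableD:
  "definable_measurable P N E r \<Longrightarrow> P \<phi> \<Longrightarrow> defset (space N) E r \<phi> \<in> sets (PiM (fv \<phi>) (\<lambda>_. N))"
  by (simp add: definable_measurable_def)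

context
  fixes N :: "'b measure" and E :: "'b \<Rightarrow> 'b \<Rightarrow> bool" and r :: 'b
  assumes prob: "prob_space N" and meas: "definable_measurable (\<lambda>_. True) N E r"
begin

lemmas defset_measurable = definable_measurableD[OF meas TrueI]

lemma stone_mod_indep_conj:
  "stone_mod N E r (indep_conj \<phi> \<psi>) = stone_mod N E r \<phi> * stone_mod N E r \<psi>"
proof -
  have shift: "inj (\<lambda>u::nat. var_bound \<phi> + u)" by (simp add: inj_on_def)
  have "fv \<phi> \<inter> fv (rename_fm (\<lambda>u. var_bound \<phi> + u) \<psi>) = {}"
    using less_var_bound[of _ \<phi>] by (auto simp: fv_rename_fm[OF shift])
  then show ?thesis
    unfolding indep_conj_def
    by (simp add: stone_mod_Conj[OF prob _ defset_measurable defset_measurable defset_measurable]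
        stone_mod_rename_fm[OF prob shift defset_measurable])
qed

lemma stone_mod_indep_power: "stone_mod N E r (indep_power \<phi> n) = stone_mod N E r \<phi> ^ n"
  by (induction n) (simp_all add: stone_mod_true_fm stone_mod_indep_conj)

lemma stone_mod_bernstein_fm:
  "distinct \<phi>s \<Longrightarrow>
    stone_mod N E r (bernstein_fm a b \<phi>s) = bernstein_weight a b (set \<phi>s) (stone_mod N E r)"
  by (induction \<phi>s)
     (simp_all add: bernstein_weight_def bernstein_mono_def stone_mod_true_fm stone_mod_indep_conj
       stone_mod_indep_power stone_mod_Neg[OF prob defset_measurable])

end

lemma stone_fin_bernstein_fm:
  assumes "finite V" "V \<noteq> {}" "distinct \<phi>s"
  shows "stone_fin V E r (bernstein_fm a b \<phi>s) = bernstein_weight a b (set \<phi>s) (stone_fin V E r)"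
proof -
  have "stone_fin V E r = stone_mod (uniform_count_measure V) E r"
    using stone_fin_eq_stone_mod[OF assms(1,2)] by blast
  then show ?thesis
    using stone_mod_bernstein_fm[OF prob_space_uniform_count_measure[OF assms(1,2)]
        definable_measurable_uniform_count_measure[OF assms(1)] assms(3)]
    by simp
qed

lemma exists_fm_peaked_at_root:
  assumes prob: "prob_space M" and meas: "definable_measurable (\<lambda>_. True) M EL r"
    and F: "finite F" and \<epsilon>: "0 < \<epsilon>" and \<delta>: "0 < \<delta>"
  obtains \<Psi> where "0 < stone_mod M EL r \<Psi>"
    and "\<And>(V :: 'a set) E v \<phi>. finite V \<Longrightarrow> V \<noteq> {} \<Longrightarrow> \<phi> \<in> F \<Longrightarrow>
      \<epsilon> \<le> \<bar>stone_fin V E v \<phi> - stone_mod M EL r \<phi>\<bar> \<Longrightarrow>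
      stone_fin V E v \<Psi> \<le> \<delta> * stone_mod M EL r \<Psi>"
proof -
  let ?p = "stone_mod M EL r"
  obtain a b where pos: "0 < bernstein_weight a b F ?p"
    and peak: "\<And>t \<phi>. (\<And>\<psi>. \<psi> \<in> F \<Longrightarrow> 0 \<le> t \<psi> \<and> t \<psi> \<le> 1) \<Longrightarrow> \<phi> \<in> F \<Longrightarrow>
      \<epsilon> \<le> \<bar>t \<phi> - ?p \<phi>\<bar> \<Longrightarrow> bernstein_weight a b F t \<le> \<delta> * bernstein_weight a b F ?p"
    using bernstein_weight_peak[OF F _ \<epsilon> \<delta>, of ?p] stone_mod_bounds[OF prob] by auto
  obtain \<phi>s where \<phi>s: "set \<phi>s = F" "distinct \<phi>s" using finite_distinct_list[OF F] by blast
  have \<Psi>: "stone_mod M EL r (bernstein_fm a b \<phi>s) = bernstein_weight a b F ?p"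
    using stone_mod_bernstein_fm[OF prob meas \<phi>s(2)] by (simp add: \<phi>s(1))
  show thesis
  proof (rule that[of "bernstein_fm a b \<phi>s"])
    show "0 < stone_mod M EL r (bernstein_fm a b \<phi>s)" using pos \<Psi> by simp
    fix V :: "'a set" and E v \<phi>
    assume V: "finite V" "V \<noteq> {}" and \<phi>: "\<phi> \<in> F" "\<epsilon> \<le> \<bar>stone_fin V E v \<phi> - ?p \<phi>\<bar>"
    have "stone_fin V E v (bernstein_fm a b \<phi>s) = bernstein_weight a b F (stone_fin V E v)"
      using stone_fin_bernstein_fm[OF V \<phi>s(2)] by (simp add: \<phi>s(1))
    also have "\<dots> \<le> \<delta> * bernstein_weight a b F ?p"
      using \<phi> stone_fin_bounds[OF V] by (intro peak[of "stone_fin V E v" \<phi>]) auto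
    finally show "stone_fin V E v (bernstein_fm a b \<phi>s) \<le>
        \<delta> * stone_mod M EL r (bernstein_fm a b \<phi>s)"
      by (simp add: \<Psi>)
  qed
qed

section \<open>Diagonal selection\<close>

lemma diagonal_selection:
  fixes Q :: "nat \<Rightarrow> nat \<Rightarrow> 'v \<Rightarrow> bool"
  assumes ne: "\<And>n. V n \<noteq> {}"
    and mono: "\<And>m m' n v. m \<le> m' \<Longrightarrow> Q m' n v \<Longrightarrow> Q m n v"
    and ev: "\<And>m. eventually (\<lambda>n. \<exists>v\<in>V n. Q m n v) sequentially"
  obtains rs where "\<And>n. rs n \<in> V n" and "\<And>m. eventually (\<lambda>n. Q m n (rs n)) sequentially"
proof -
  have "\<exists>v\<in>V n. \<forall>m\<le>n. (\<exists>w\<in>V n. Q m n w) \<longrightarrow> Q m n v" for n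
  proof (cases "\<exists>m\<le>n. \<exists>w\<in>V n. Q m n w")
    case True
    let ?M = "{m. m \<le> n \<and> (\<exists>w\<in>V n. Q m n w)}"
    have "Max ?M \<in> ?M" using True by (intro Max_in) auto
    then obtain v where "v \<in> V n" "Q (Max ?M) n v" by auto
    moreover have "m \<le> Max ?M" if "m \<le> n" "\<exists>w\<in>V n. Q m n w" for m
      using that by (intro Max_ge) auto
    ultimately show ?thesis using mono by blast
  next
    case False
    then show ?thesis using ne[of n] by blast
  qed
  then obtain rs where rs: "\<And>n. rs n \<in> V n"
    and rs_best: "\<And>n m. m \<le> n \<Longrightarrow> \<exists>w\<in>V n. Q m n w \<Longrightarrow> Q m n (rs n)"
    by metis
  show thesis
  proof (rule that[OF rs])
    fix m
    show "eventually (\<lambda>n. Q m n (rs n)) sequentially"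
      using ev[of m] eventually_ge_at_top[of m] by eventually_elim (use rs_best in blast)
  qed
qed

lemma LIMSEQ_of_enumerated_approx:
  fixes f :: "nat \<Rightarrow> 'c::countable \<Rightarrow> real"
  assumes approx: "\<And>m. eventually
    (\<lambda>n. \<forall>j<m. \<bar>f n (from_nat j) - p (from_nat j)\<bar> < 1 / Suc m) sequentially"
  shows "(\<lambda>n. f n \<phi>) \<longlonglongrightarrow> p \<phi>"
proof (rule tendstoI)
  fix \<epsilon> :: real assume "0 < \<epsilon>"
  then obtain k :: nat where k: "1 / Suc k < \<epsilon>" by (rule nat_approx_posE)
  define m where "m = max k (Suc (to_nat \<phi>))"
  have "1 / real (Suc m) \<le> 1 / Suc k" by (simp add: m_def frac_le)
  then have m: "to_nat \<phi> < m" "1 / real (Suc m) < \<epsilon>" using k by (simp_all add: m_def)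
  show "eventually (\<lambda>n. dist (f n \<phi>) (p \<phi>) < \<epsilon>) sequentially"
    using approx[of m]
  proof eventually_elim
    case (elim n)
    then have "\<bar>f n (from_nat (to_nat \<phi>)) - p (from_nat (to_nat \<phi>))\<bar> < 1 / Suc m"
      using m(1) by blast
    then show ?case using m(2) by (simp add: dist_real_def)
  qed
qed

lemma diagonal_convergence:
  fixes s :: "nat \<Rightarrow> 'v \<Rightarrow> 'c::countable \<Rightarrow> real"
  assumes ne: "\<And>n. V n \<noteq> {}"
    and near: "\<And>F \<epsilon>. finite F \<Longrightarrow> 0 < \<epsilon> \<Longrightarrow>
      eventually (\<lambda>n. \<exists>v\<in>V n. \<forall>\<phi>\<in>F. \<bar>s n v \<phi> - p \<phi>\<bar> < \<epsilon>) sequentially"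
  obtains rs where "\<And>n. rs n \<in> V n" and "\<And>\<phi>. (\<lambda>n. s n (rs n) \<phi>) \<longlonglongrightarrow> p \<phi>"
proof -
  define Q where "Q m n v \<longleftrightarrow> (\<forall>j<m. \<bar>s n v (from_nat j) - p (from_nat j)\<bar> < 1 / Suc m)" for m n v
  have Q_mono: "\<And>m m' n v. m \<le> m' \<Longrightarrow> Q m' n v \<Longrightarrow> Q m n v"
    unfolding Q_def
  proof (intro allI impI)
    fix m m' n v j
    assume m_le: "m \<le> m'" and Q': "\<forall>j<m'. \<bar>s n v (from_nat j) - p (from_nat j)\<bar> < 1 / Suc m'"
      and "j < m"
    then have "\<bar>s n v (from_nat j) - p (from_nat j)\<bar> < 1 / Suc m'" by simp
    moreover have "1 / real (Suc m') \<le> 1 / Suc m" using m_le by (simp add: frac_le)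
    ultimately show "\<bar>s n v (from_nat j) - p (from_nat j)\<bar> < 1 / Suc m" by linarith
  qed
  have Q_ev: "\<And>m. eventually (\<lambda>n. \<exists>v\<in>V n. Q m n v) sequentially"
  proof -
    fix m
    have "eventually (\<lambda>n. \<exists>v\<in>V n. \<forall>\<phi>\<in>from_nat ` {..<m}. \<bar>s n v \<phi> - p \<phi>\<bar> < 1 / Suc m) sequentially"
      by (rule near) auto
    then show "eventually (\<lambda>n. \<exists>v\<in>V n. Q m n v) sequentially"
      by eventually_elim (auto simp: Q_def)
  qed
  obtain rs where rs: "\<And>n. rs n \<in> V n" and rsQ: "\<And>m. eventually (\<lambda>n. Q m n (rs n)) sequentially"
  proof (rule diagonal_selection[of V Q])
    show "\<And>m m' n v. m \<le> m' \<Longrightarrow> Q m' n v \<Longrightarrow> Q m n v" by (fact Q_mono)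
  qed (use ne Q_ev in blast)+
  show thesis
  proof (rule that[OF rs])
    show "(\<lambda>n. s n (rs n) \<phi>) \<longlonglongrightarrow> p \<phi>" for \<phi>
      by (rule LIMSEQ_of_enumerated_approx) (use rsQ in \<open>simp add: Q_def\<close>)
  qed
qed

section \<open>Rooting the sequence at a vertex of an algebraic set\<close>

instance tm :: countable by countable_datatype
instance fm :: countable by countable_datatype

lemma eventually_sat_sentence:
  assumes "fv \<phi> = {}" and "sat (space M) EL r (\<lambda>_. undefined) \<phi>"
    and "(\<lambda>n. stone_fin (V n) (E n) r' \<phi>) \<longlonglongrightarrow> stone_mod M EL r \<phi>"
  shows "eventually (\<lambda>n. sat (V n) (E n) r' (\<lambda>_. undefined) \<phi>) sequentially"
proof -
  have "eventually (\<lambda>n. 1 / 2 < stone_fin (V n) (E n) r' \<phi>) sequentially"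
    using assms by (intro order_tendstoD(1)) (auto simp: stone_mod_sentence)
  then show ?thesis
    by eventually_elim (simp add: stone_fin_sentence[OF assms(1)] split: if_splits)
qed

context
  fixes V :: "nat \<Rightarrow> 'a set" and E :: "nat \<Rightarrow> 'a \<Rightarrow> 'a \<Rightarrow> bool"
    and M :: "'b measure" and EL :: "'b \<Rightarrow> 'b \<Rightarrow> bool" and \<xi> :: fm and x :: nat
  assumes fin: "\<And>n. finite (V n)" and ne: "\<And>n. V n \<noteq> {}"
    and xi_fv: "fv \<xi> = {x}" and xi_graph: "graph_fm \<xi>"
    and limit: "\<And>\<phi>. graph_fm \<phi> \<Longrightarrow>
      (\<lambda>n. stone_fin (V n) (E n) undefined \<phi>) \<longlonglongrightarrow> stone_mod M EL undefined \<phi>"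
    and algebraic: "finite (sat_vertices (space M) EL \<xi>)"
begin

lemma eventually_card_sat_vertices_le:
  "eventually (\<lambda>n. card (sat_vertices (V n) (E n) \<xi>) \<le> card (sat_vertices (space M) EL \<xi>))
    sequentially"
proof -
  let ?k = "card (sat_vertices (space M) EL \<xi>)"
  have "sat (space M) EL undefined (\<lambda>_. undefined) (at_most_fm \<xi> x ?k)"
    using sat_at_most_fm[OF xi_fv xi_graph algebraic] by simp
  then have "eventually (\<lambda>n. sat (V n) (E n) undefined (\<lambda>_. undefined) (at_most_fm \<xi> x ?k))
      sequentially"
    using limit[OF graph_fm_at_most_fm[OF xi_fv xi_graph]]
    by (intro eventually_sat_sentence[OF fv_at_most_fm[OF xi_fv xi_graph]])
  then show ?thesis
    by eventually_elim (simp add: sat_at_most_fm[OF xi_fv xi_graph] fin sat_vertices_def)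
qed

lemma eventually_exists_near_root:
  assumes prob: "prob_space M" and meas: "definable_measurable graph_fm M EL undefined"
    and r: "r \<in> sat_vertices (space M) EL \<xi>" and F: "finite F" and \<epsilon>: "0 < \<epsilon>"
  shows "eventually (\<lambda>n. \<exists>v\<in>V n. \<forall>\<phi>\<in>F. \<bar>stone_fin (V n) (E n) v \<phi> - stone_mod M EL r \<phi>\<bar> < \<epsilon>)
    sequentially"
proof -
  define k where "k = card (sat_vertices (space M) EL \<xi>)"
  have k: "0 < k" using algebraic r by (auto simp: k_def card_gt_0_iff)
  have meas_r: "definable_measurable (\<lambda>_. True) M EL r"
    using definable_measurable_rooted[OF meas] r by (simp add: sat_vertices_def)
  obtain \<Psi> where pos: "0 < stone_mod M EL r \<Psi>"
    and peak: "\<And>(V' :: 'a set) E' v \<phi>. finite V' \<Longrightarrow> V' \<noteq> {} \<Longrightarrow> \<phi> \<in> F \<Longrightarrow>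
      \<epsilon> \<le> \<bar>stone_fin V' E' v \<phi> - stone_mod M EL r \<phi>\<bar> \<Longrightarrow>
      stone_fin V' E' v \<Psi> \<le> 1 / (2 * k) * stone_mod M EL r \<Psi>"
    using exists_fm_peaked_at_root[OF prob meas_r F \<epsilon>, of "1 / (2 * k)"] k by auto
  let ?w = "stone_mod M EL r \<Psi>"
  have "?w \<le> stone_mod M EL undefined (ex_root_fm \<xi> x \<Psi>)"
    by (rule stone_mod_ex_root_fm_ge[OF xi_fv xi_graph prob meas r])
  then have "eventually (\<lambda>n. ?w / 2 < stone_fin (V n) (E n) undefined (ex_root_fm \<xi> x \<Psi>))
      sequentially"
    using limit[OF graph_fm_ex_root_fm[OF xi_fv xi_graph]] pos by (intro order_tendstoD(1)) auto
  with eventually_card_sat_vertices_le show ?thesis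
  proof eventually_elim
    case (elim n)
    show ?case
    proof (rule ccontr)
      assume "\<not> ?case"
      then have "stone_fin (V n) (E n) v \<Psi> \<le> ?w / (2 * k)" if "v \<in> sat_vertices (V n) (E n) \<xi>" for v
        using that peak[OF fin ne] by (force simp: sat_vertices_def not_less)
      then have "stone_fin (V n) (E n) undefined (ex_root_fm \<xi> x \<Psi>) \<le> k * (?w / (2 * k))"
        using elim(1) pos unfolding k_def
        by (intro stone_fin_ex_root_fm_le_card[OF xi_fv xi_graph fin]) auto
      then show False using elim(2) k by simp
    qed
  qed
qed

end

theorem theorem2:
  fixes V :: "nat \<Rightarrow> 'a set" and E :: "nat \<Rightarrow> 'a \<Rightarrow> 'a \<Rightarrow> bool"
    and M :: "('b::polish_space) measure" and EL :: "'b \<Rightarrow> 'b \<Rightarrow> bool"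
    and \<xi> :: fm and x :: nat
  assumes fin: "\<And>n. finite (V n)" and ne: "\<And>n. V n \<noteq> {}"
    and gr: "\<And>n. is_graph (V n) (E n)"
    and conv: "\<And>\<phi>. graph_fm \<phi> \<Longrightarrow> convergent (\<lambda>n. stone_fin (V n) (E n) undefined \<phi>)"
    and modeling: "is_modeling M EL"
    and limit: "\<And>\<phi>. graph_fm \<phi> \<Longrightarrow>
        (\<lambda>n. stone_fin (V n) (E n) undefined \<phi>) \<longlonglongrightarrow> stone_mod M EL undefined \<phi>"
    and xi_graph: "graph_fm \<xi>" and xi_fv: "fv \<xi> = {x}"
    and algebraic: "finite {v \<in> space M. sat (space M) EL undefined (\<lambda>_. v) \<xi>}"
    and xi_ne: "{v \<in> space M. sat (space M) EL undefined (\<lambda>_. v) \<xi>} \<noteq> {}"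
  shows "\<exists>rs r. (\<forall>n. rs n \<in> V n)
     \<and> r \<in> space M \<and> sat (space M) EL undefined (\<lambda>_. r) \<xi>
     \<and> definable_measurable (\<lambda>_. True) M EL r
     \<and> (\<forall>\<phi>. (\<lambda>n. stone_fin (V n) (E n) (rs n) \<phi>) \<longlonglongrightarrow> stone_mod M EL r \<phi>)"
proof -
  have prob: "prob_space M" and meas: "definable_measurable graph_fm M EL undefined"
    using modeling by (simp_all add: is_modeling_def)
  obtain r where r: "r \<in> sat_vertices (space M) EL \<xi>"
    using xi_ne by (auto simp: sat_vertices_def)
  obtain rs where "\<And>n. rs n \<in> V n"
    and "\<And>\<phi>. (\<lambda>n. stone_fin (V n) (E n) (rs n) \<phi>) \<longlonglongrightarrow> stone_mod M EL r \<phi>"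
    using diagonal_convergence[OF ne eventually_exists_near_root[OF fin ne xi_fv xi_graph limit
        algebraic[folded sat_vertices_def] prob meas r]] by blast
  then show ?thesis
    using r definable_measurable_rooted[OF meas] unfolding sat_vertices_def by blast
qed

end
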